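(* Let $\hat{\omega}_1,\hat{\omega}_2,\dots$ be the discretized frequencies (defined in the context, with $d=1$, base offset $a\ge 0$ and spacing $l>0$), regarded as independent random variables, and suppose that $\kappa_i:=\mathbb{E}\hat{\omega}_i=0$ for every $i$. Let $\zeta_i^2=\mathrm{Var}(\hat{\omega}_i)$, $s_n=\sqrt{\sum_{i=1}^n\zeta_i^2}$, $S_n=\sum_{i=1}^n\hat{\omega}_i$ and $S_n'=S_n/s_n$. Then, as $n\to\infty$, $$D_{KL}(S_n')=\frac12\log(2\pi\mathrm{e})-\Big[H(S_n)-\log\frac{s_n}{l}\Big]+O\Big(\frac{1}{s_n}\Big),$$ where, for every $n\ge1$, the error term is bounded in absolute value by $\frac{l}{s_n}+\frac{l^2}{2s_n^2}$. Moreover, if $U$ is a random variable uniform on $(-1/2,1/2)$ and independent of $\{\hat{\omega}_i\}$, then as $n\to\infty$, $$D_{KL}(S_n')=D_{KL}\Big(S_n'+\frac{l}{s_n}U\Big)+O\Big(\frac1{s_n}\Big),$$ where the error term is bounded in absolute value by $\frac{l}{s_n}+\frac{13 l^2}{24 s_n^2}$.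
   Context: Model: let $(\Omega,\mathcal F,\mathbb P)$ be a probability space, $\{\xi_t\}_{t\ge0}$ and $\{\eta_t\}_{t\ge0}$ independent real stochastic processes, each either a Wiener process or a Lévy process whose Lévy measure $\nu$ satisfies $\int_{\mathbb R\setminus\{0\}}|z|^2\nu(dz)<\infty$; let $\omega:\mathbb R\to\mathbb R$ be bounded and continuous, $(\theta_0,I_0)$ initial values with $\mathbb E\theta_0^2<\infty$, and $\theta_t=\theta_0+\int_0^t\omega(I_s)\,ds+\eta_t$, $I_t=I_0+\xi_t$ (the angle is taken in its lift to $\mathbb R$). For fixed $a\ge0$, $l>0$, set $\hat{\omega}_n=a+l\cdot\mathrm{round}\big((\theta_n/n-a)/l\big)$, $n\ge1$, where $\mathrm{round}(x)$ is the nearest integer to $x$; these take values in $\{a+kl:k\in\mathbb Z\}$ and have finite variances. Entropies: for a discrete random variable $Y$ with mass function $p$, $H(Y)=-\sum_y p(y)\log p(y)$; for a lattice-valued $Y$ with values in $\{b+k\delta:k\in\mathbb Z\}$, mean $\mu$ and variance $\sigma^2$, $D_{KL}(Y)=\sum_y p(y)\log\frac{p(y)}{q(y)}$ where $q(b+k\delta)=\int_{b+k\delta}^{b+(k+1)\delta}\phi(y)dy$ and $\phi$ is the density of $\mathcal N(\mu,\sigma^2)$ (here $S_n'$ takes values in $\{(na+kl)/s_n:k\in\mathbb Z\}$). For a continuous random variable $X$ with density $f$, mean $\mu$ and variance $\sigma^2$, $h(X)=-\int f\log f$ and $D_{KL}(X)=\int f\log(f/g)=\frac12\log(2\pi\mathrm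 e\sigma^2)-h(X)$, with $g$ the $\mathcal N(\mu,\sigma^2)$ density. *)

theory Defs
  imports "HOL-Probability.Probability"
begin

definition rv_mean :: "'a measure \<Rightarrow> ('a \<Rightarrow> real) \<Rightarrow> real" where
  "rv_mean M Y = (\<integral>\<omega>. Y \<omega> \<partial>M)"

definition rv_var :: "'a measure \<Rightarrow> ('a \<Rightarrow> real) \<Rightarrow> real" where
  "rv_var M Y = (\<integral>\<omega>. (Y \<omega> - rv_mean M Y)\<^sup>2 \<partial>M)"

definition pmass :: "'a measure \<Rightarrow> ('a \<Rightarrow> real) \<Rightarrow> real \<Rightarrow> real" where
  "pmass M Y y = measure M {\<omega> \<in> space M. Y \<omega> = y}"

text \<open>Shannon entropy H(Y) = - sum_y p(y) log p(y) of a discrete random variable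
  (natural logarithm; terms with p(y) = 0 vanish).\<close>
definition disc_entropy :: "'a measure \<Rightarrow> ('a \<Rightarrow> real) \<Rightarrow> real" where
  "disc_entropy M Y = (\<Sum>\<^sub>\<infinity>y. - pmass M Y y * ln (pmass M Y y))"

definition dkl_lattice :: "'a measure \<Rightarrow> ('a \<Rightarrow> real) \<Rightarrow> real \<Rightarrow> real \<Rightarrow> real" where
  "dkl_lattice M Y b \<delta> =
     (\<Sum>\<^sub>\<infinity>k::int.
        pmass M Y (b + of_int k * \<delta>) *
        ln (pmass M Y (b + of_int k * \<delta>) /
            (LBINT x = b + of_int k * \<delta> .. b + (of_int k + 1) * \<delta>.
               normal_density (rv_mean M Y) (sqrt (rv_var M Y)) x)))"

text \<open>D_KL of a continuous random variable X: the Kullback-Leibler divergence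
  (natural log) of the law of X from the Gaussian with the same mean and variance,
  i.e. the integral of f log (f/g).\<close>
definition dkl_cont :: "'a measure \<Rightarrow> ('a \<Rightarrow> real) \<Rightarrow> real" where
  "dkl_cont M X =
     KL_divergence (exp 1)
       (density lborel (normal_density (rv_mean M X) (sqrt (rv_var M X))))
       (distr M lborel X)"

end

(*
  Write Y = S_n / s_n. It lives on the lattice b + d Z with d = l / s_n, has mean 0 and
  variance 1, and H(Y) = H(S_n) because scaling is injective. Let p_k be the masses of Y at
  the points x_k. The N(0,1)-mass q_k of the cell [x_k, x_k + d] lies between
  d phi(x_k) exp(-|x_k| d - d^2/2) and d phi(x_k) exp(|x_k| d), so averaging ln q_k against
  p_k with sum p_k x_k^2 = 1 and sum p_k |x_k| <= 1 gives
  D_KL(Y) = -H(Y) - ln d + ln (sqrt (2 pi)) + 1/2 + R with |R| <= d + d^2/2.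
  Adding d U spreads each atom uniformly over a cell of length d, so Y + d U has density
  p_k / d there and variance 1 + d^2/12, and its D_KL is exactly
  -H(Y) - ln d + ln (sqrt (2 pi (1 + d^2/12))) + 1/2. The two differ by
  R - ln (1 + d^2/12) / 2, and 0 <= ln (1 + d^2/12) <= d^2/12.
*)
theory Submission
  imports Defs "HOL-Library.Nat_Bijection"
begin

section \<open>Discrete entropy\<close>

lemma infsum_eq_suminf_abs_summable:
  fixes f :: "nat \<Rightarrow> real"
  assumes "summable (\<lambda>m. \<bar>f m\<bar>)"
  shows "infsum f UNIV = (\<Sum>m. f m)"
  using assms by (intro infsumI norm_summable_imp_has_sum summable_sums)
    (auto dest: summable_rabs_cancel)

lemma pmass_nonneg: "0 \<le> pmass M Y y"
  by (simp add: pmass_def)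

lemma (in prob_space) pmass_le_1: "pmass M Y y \<le> 1"
  by (simp add: pmass_def)

lemma pmass_comp_inj:
  assumes "inj f"
  shows "pmass M (\<lambda>\<omega>. f (X \<omega>)) (f y) = pmass M X y"
  using assms by (simp add: pmass_def inj_eq)

lemma pmass_eq_0:
  assumes "\<And>\<omega>. \<omega> \<in> space M \<Longrightarrow> X \<omega> \<noteq> y"
  shows "pmass M X y = 0"
proof -
  have empty: "{\<omega> \<in> space M. X \<omega> = y} = {}"
    using assms by blast
  show ?thesis
    unfolding pmass_def empty by simp
qed

lemma disc_entropy_comp_inj:
  assumes "inj f"
  shows "disc_entropy M (\<lambda>\<omega>. f (X \<omega>)) = disc_entropy M X"
proof -
  define h where "h Y y = - pmass M Y y * ln (pmass M Y y)" for Y y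
  have "disc_entropy M (\<lambda>\<omega>. f (X \<omega>)) = infsum (h (\<lambda>\<omega>. f (X \<omega>))) (range f)"
    unfolding disc_entropy_def
  proof (rule infsum_cong_neutral)
    fix z assume "z \<in> UNIV - range f"
    then have "pmass M (\<lambda>\<omega>. f (X \<omega>)) z = 0"
      by (intro pmass_eq_0) auto
    then show "- pmass M (\<lambda>\<omega>. f (X \<omega>)) z * ln (pmass M (\<lambda>\<omega>. f (X \<omega>)) z) = 0"
      by simp
  qed (simp_all add: h_def)
  also have "\<dots> = infsum (h (\<lambda>\<omega>. f (X \<omega>)) \<circ> f) UNIV"
    by (rule infsum_reindex[OF assms])
  also have "\<dots> = disc_entropy M X"
    by (simp add: disc_entropy_def h_def o_def pmass_comp_inj[OF assms])
  finally show ?thesis .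
qed

lemma mult_ln_nonpos:
  fixes p :: real
  assumes "0 \<le> p" "p \<le> 1"
  shows "p * ln p \<le> 0"
  using assms by (cases "p = 0") (auto simp: mult_nonneg_nonpos)

lemma neg_mult_ln_le:
  fixes p t :: real
  assumes "0 \<le> p"
  shows "- (p * ln p) \<le> p * t + exp (- t)"
proof (cases "p = 0")
  case False
  with assms have p: "p > 0" by simp
  have "ln (exp (- t) / p) \<le> exp (- t) / p - 1"
    using p by (intro ln_le_minus_one) simp
  then have "p * (- t - ln p) \<le> p * (exp (- t) / p - 1)"
    using p by (intro mult_left_mono) (simp_all add: ln_div)
  then show ?thesis
    using p by (simp add: algebra_simps)
qed simp

lemma summable_exp_neg_abs_int_decode:
  "summable (\<lambda>m. exp (- \<bar>real_of_int (int_decode m)\<bar>))"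
proof (rule summable_comparison_test')
  show "summable (\<lambda>m. exp (1/2) * exp (- 1/2 :: real) ^ m)"
    by (intro summable_mult summable_geometric) simp
next
  fix m :: nat
  have "real m / 2 - 1/2 \<le> \<bar>real_of_int (int_decode m)\<bar>"
  proof (cases "even m")
    case True
    then obtain k where "m = 2 * k" by auto
    then show ?thesis by (simp add: int_decode_def sum_decode_def)
  next
    case False
    then obtain k where "m = 2 * k + 1" using oddE by blast
    then show ?thesis by (simp add: int_decode_def sum_decode_def field_simps)
  qed
  then have "exp (- \<bar>real_of_int (int_decode m)\<bar>) \<le> exp (1/2 - real m / 2)"
    by simp
  also have "\<dots> = exp (1/2) * exp (- 1/2 :: real) ^ m"
    by (simp add: exp_diff exp_of_nat_mult[symmetric] exp_minus field_simps flip: exp_add)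
  finally show "norm (exp (- \<bar>real_of_int (int_decode m)\<bar>)) \<le> exp (1/2) * exp (- 1/2 :: real) ^ m"
    by simp
qed

lemma summable_entropy_int_decode:
  fixes p :: "nat \<Rightarrow> real"
  assumes p0: "\<And>m. 0 \<le> p m" and p1: "\<And>m. p m \<le> 1"
    and moment: "summable (\<lambda>m. \<bar>real_of_int (int_decode m)\<bar> * p m)"
  shows "summable (\<lambda>m. - (p m * ln (p m)))"
proof (rule summable_comparison_test')
  show "summable (\<lambda>m. \<bar>real_of_int (int_decode m)\<bar> * p m + exp (- \<bar>real_of_int (int_decode m)\<bar>))"
    by (intro summable_add moment summable_exp_neg_abs_int_decode)
next
  fix m
  have "0 \<le> - (p m * ln (p m))"
    using mult_ln_nonpos[OF p0 p1] by simp
  moreover have "- (p m * ln (p m)) \<le> p m * \<bar>real_of_int (int_decode m)\<bar> + exp (- \<bar>real_of_int (int_decode m)\<bar>)"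
    by (rule neg_mult_ln_le[OF p0])
  ultimately show "norm (- (p m * ln (p m))) \<le> \<bar>real_of_int (int_decode m)\<bar> * p m + exp (- \<bar>real_of_int (int_decode m)\<bar>)"
    by (simp add: mult.commute)
qed

section \<open>Gaussian mass of a short interval\<close>

lemma power2_bounds_on_interval:
  fixes x t d :: real
  assumes "x \<le> t" "t \<le> x + d"
  shows "x\<^sup>2 - 2 * \<bar>x\<bar> * d \<le> t\<^sup>2" "t\<^sup>2 \<le> x\<^sup>2 + 2 * \<bar>x\<bar> * d + d\<^sup>2"
proof -
  define s where "s = t - x"
  have s: "0 \<le> s" "s \<le> d" "t = x + s"
    using assms by (auto simp: s_def)
  have "- (\<bar>x\<bar> * s) \<le> x * s" "x * s \<le> \<bar>x\<bar> * s"
    using s mult_right_mono[of "-\<bar>x\<bar>" x s] mult_right_mono[of x "\<bar>x\<bar>" s] by simp_all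
  moreover have "\<bar>x\<bar> * s \<le> \<bar>x\<bar> * d" "s\<^sup>2 \<le> d\<^sup>2"
    using s by (auto intro: mult_left_mono power_mono)
  ultimately show "x\<^sup>2 - 2 * \<bar>x\<bar> * d \<le> t\<^sup>2" "t\<^sup>2 \<le> x\<^sup>2 + 2 * \<bar>x\<bar> * d + d\<^sup>2"
    unfolding s(3) by (auto simp: power2_eq_square algebra_simps)
qed

lemma normal_cell_mass_bounds:
  fixes x d :: real
  assumes d: "d > 0"
  shows "d * (exp (- (x\<^sup>2 + 2 * \<bar>x\<bar> * d + d\<^sup>2) / 2) / sqrt (2 * pi))
           \<le> (LBINT t=x..x+d. normal_density 0 1 t)"
    and "(LBINT t=x..x+d. normal_density 0 1 t)
           \<le> d * (exp (- (x\<^sup>2 - 2 * \<bar>x\<bar> * d) / 2) / sqrt (2 * pi))"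
proof -
  have cont: "continuous_on {x..x+d} (normal_density 0 1)"
    unfolding normal_density_def by (intro continuous_intros) auto
  have eq: "(LBINT t=x..x+d. normal_density 0 1 t) = integral {x..x+d} (normal_density 0 1)"
    using d by (intro interval_integral_eq_integral borel_integrable_atLeastAtMost' cont) auto
  have int: "normal_density 0 1 integrable_on {x..x+d}"
    by (rule integrable_continuous_interval[OF cont])
  have "integral {x..x+d} (\<lambda>_. exp (- (x\<^sup>2 + 2 * \<bar>x\<bar> * d + d\<^sup>2) / 2) / sqrt (2 * pi))
          \<le> integral {x..x+d} (normal_density 0 1)"
  proof (rule integral_le[OF _ int])
    fix t assume "t \<in> {x..x+d}"
    then show "exp (- (x\<^sup>2 + 2 * \<bar>x\<bar> * d + d\<^sup>2) / 2) / sqrt (2 * pi) \<le> normal_density 0 1 t"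
      using power2_bounds_on_interval(2)[of x t d]
      by (auto simp: normal_density_def intro!: divide_right_mono)
  qed auto
  then show "d * (exp (- (x\<^sup>2 + 2 * \<bar>x\<bar> * d + d\<^sup>2) / 2) / sqrt (2 * pi))
               \<le> (LBINT t=x..x+d. normal_density 0 1 t)"
    using d by (simp add: eq)
  have "integral {x..x+d} (normal_density 0 1)
          \<le> integral {x..x+d} (\<lambda>_. exp (- (x\<^sup>2 - 2 * \<bar>x\<bar> * d) / 2) / sqrt (2 * pi))"
  proof (rule integral_le[OF int])
    fix t assume "t \<in> {x..x+d}"
    then show "normal_density 0 1 t \<le> exp (- (x\<^sup>2 - 2 * \<bar>x\<bar> * d) / 2) / sqrt (2 * pi)"
      using power2_bounds_on_interval(1)[of x t d]
      by (auto simp: normal_density_def intro!: divide_right_mono)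
  qed auto
  then show "(LBINT t=x..x+d. normal_density 0 1 t)
               \<le> d * (exp (- (x\<^sup>2 - 2 * \<bar>x\<bar> * d) / 2) / sqrt (2 * pi))"
    using d by (simp add: eq)
qed

lemma normal_cell_mass_pos:
  fixes x d :: real
  assumes "d > 0"
  shows "(LBINT t=x..x+d. normal_density 0 1 t) > 0"
  using normal_cell_mass_bounds(1)[OF assms, of x] assms
  by (smt (verit) divide_pos_pos exp_gt_zero mult_pos_pos real_sqrt_gt_0_iff pi_gt_zero)

lemma ln_normal_cell_mass_approx:
  fixes x d :: real
  assumes d: "d > 0"
  shows "\<bar>ln (LBINT t=x..x+d. normal_density 0 1 t) - (ln d - ln (sqrt (2 * pi)) - x\<^sup>2 / 2)\<bar>
           \<le> \<bar>x\<bar> * d + d\<^sup>2 / 2"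
proof -
  let ?q = "LBINT t=x..x+d. normal_density 0 1 t"
  have q: "?q > 0"
    by (rule normal_cell_mass_pos[OF d])
  have "ln d - (x\<^sup>2 + 2 * \<bar>x\<bar> * d + d\<^sup>2) / 2 - ln (sqrt (2 * pi))
          = ln (d * (exp (- (x\<^sup>2 + 2 * \<bar>x\<bar> * d + d\<^sup>2) / 2) / sqrt (2 * pi)))"
    using d by (simp add: ln_mult ln_div field_simps)
  also have "\<dots> \<le> ln ?q"
    using normal_cell_mass_bounds(1)[OF d, of x] d by (intro ln_mono) auto
  finally have lower: "ln d - (x\<^sup>2 + 2 * \<bar>x\<bar> * d + d\<^sup>2) / 2 - ln (sqrt (2 * pi)) \<le> ln ?q" .
  have "ln ?q \<le> ln (d * (exp (- (x\<^sup>2 - 2 * \<bar>x\<bar> * d) / 2) / sqrt (2 * pi)))"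
    using normal_cell_mass_bounds(2)[OF d, of x] q by (intro ln_mono) auto
  also have "\<dots> = ln d - (x\<^sup>2 - 2 * \<bar>x\<bar> * d) / 2 - ln (sqrt (2 * pi))"
    using d by (simp add: ln_mult ln_div field_simps)
  finally have upper: "ln ?q \<le> ln d - (x\<^sup>2 - 2 * \<bar>x\<bar> * d) / 2 - ln (sqrt (2 * pi))" .
  show ?thesis
    using lower upper unfolding abs_le_iff
    by (simp add: field_simps) (use zero_le_power2[of d] in linarith)
qed

section \<open>Sums of independent lattice variables\<close>

lemma (in prob_space) indep_sum_moments:
  fixes X :: "'i \<Rightarrow> 'a \<Rightarrow> real"
  assumes indep: "indep_vars (\<lambda>_. borel) X I" and fin: "finite I"
    and sq_int: "\<And>i. i \<in> I \<Longrightarrow> integrable M (\<lambda>\<omega>. (X i \<omega>)\<^sup>2)"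
    and centered: "\<And>i. i \<in> I \<Longrightarrow> expectation (X i) = 0"
  shows "expectation (\<lambda>\<omega>. \<Sum>i\<in>I. X i \<omega>) = 0"
    and "integrable M (\<lambda>\<omega>. (\<Sum>i\<in>I. X i \<omega>)\<^sup>2)"
    and "expectation (\<lambda>\<omega>. (\<Sum>i\<in>I. X i \<omega>)\<^sup>2) = (\<Sum>i\<in>I. expectation (\<lambda>\<omega>. (X i \<omega>)\<^sup>2))"
proof -
  have meas[measurable]: "X i \<in> borel_measurable M" if "i \<in> I" for i
    using indep that unfolding indep_vars_def by auto
  have int: "integrable M (X i)" if "i \<in> I" for i
    using square_integrable_imp_integrable[OF meas] sq_int that by simp
  have products: "integrable M (\<lambda>\<omega>. X i \<omega> * X j \<omega>) \<and>
      expectation (\<lambda>\<omega>. X i \<omega> * X j \<omega>) = (if i = j then expectation (\<lambda>\<omega>. (X i \<omega>)\<^sup>2) else 0)"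
    if "i \<in> I" "j \<in> I" for i j
  proof (cases "i = j")
    case True
    then show ?thesis using sq_int that by (simp add: power2_eq_square)
  next
    case False
    have pair: "indep_vars (\<lambda>_. borel) X {i, j}"
      by (rule indep_vars_subset[OF indep]) (use that in auto)
    have "integrable M (\<lambda>\<omega>. \<Prod>k\<in>{i, j}. X k \<omega>)"
      by (rule indep_vars_integrable[OF _ pair]) (use int that in auto)
    moreover have "expectation (\<lambda>\<omega>. \<Prod>k\<in>{i, j}. X k \<omega>) = (\<Prod>k\<in>{i, j}. expectation (X k))"
      by (rule indep_vars_lebesgue_integral[OF _ pair]) (use int that in auto)
    ultimately show ?thesis
      using False centered that by simp
  qed
  have square: "(\<Sum>i\<in>I. X i \<omega>)\<^sup>2 = (\<Sum>i\<in>I. \<Sum>j\<in>I. X i \<omega> * X j \<omega>)" for \<omega>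
    by (simp add: power2_eq_square sum_product)
  show "expectation (\<lambda>\<omega>. \<Sum>i\<in>I. X i \<omega>) = 0"
    using int centered by simp
  show "integrable M (\<lambda>\<omega>. (\<Sum>i\<in>I. X i \<omega>)\<^sup>2)"
    unfolding square using products by (intro Bochner_Integration.integrable_sum) auto
  have "expectation (\<lambda>\<omega>. (\<Sum>i\<in>I. X i \<omega>)\<^sup>2)
          = (\<Sum>i\<in>I. \<Sum>j\<in>I. expectation (\<lambda>\<omega>. X i \<omega> * X j \<omega>))"
    unfolding square using products
    by (subst Bochner_Integration.integral_sum)
       (auto intro!: sum.cong Bochner_Integration.integrable_sum Bochner_Integration.integral_sum)
  also have "\<dots> = (\<Sum>i\<in>I. expectation (\<lambda>\<omega>. (X i \<omega>)\<^sup>2))"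
    using products fin by (simp add: sum.delta cong: sum.cong)
  finally show "expectation (\<lambda>\<omega>. (\<Sum>i\<in>I. X i \<omega>)\<^sup>2) = (\<Sum>i\<in>I. expectation (\<lambda>\<omega>. (X i \<omega>)\<^sup>2))" .
qed

lemma sum_in_shifted_lattice:
  fixes x :: "'i \<Rightarrow> real"
  assumes "finite I" and "\<And>i. i \<in> I \<Longrightarrow> x i \<in> range (\<lambda>k::int. a + of_int k * l)"
  shows "(\<Sum>i\<in>I. x i) \<in> range (\<lambda>k::int. real (card I) * a + of_int k * l)"
  using assms
proof (induction I rule: finite_induct)
  case empty
  show ?case by (auto intro: range_eqI[of _ _ 0])
next
  case (insert i I)
  obtain k :: int where k: "(\<Sum>i\<in>I. x i) = real (card I) * a + of_int k * l"
    using insert by auto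
  obtain j :: int where j: "x i = a + of_int j * l"
    using insert by auto
  have "(\<Sum>i\<in>insert i I. x i) = real (card (insert i I)) * a + of_int (j + k) * l"
    using insert(1,2) by (simp add: k j algebra_simps)
  then show ?case by blast
qed

lemma (in prob_space) indep_var_sum_adjoined:
  fixes X :: "'i \<Rightarrow> 'a \<Rightarrow> real" and U :: "'a \<Rightarrow> real"
  assumes indep: "indep_vars (\<lambda>_. borel) (\<lambda>j. case j of None \<Rightarrow> U | Some i \<Rightarrow> X i) (insert None (Some ` J))"
    and "I \<subseteq> J"
  shows "indep_var borel (\<lambda>\<omega>. \<Sum>i\<in>I. X i \<omega>) borel U"
proof -
  define V where "V = (\<lambda>j. case j of None \<Rightarrow> U | Some i \<Rightarrow> X i)"
  have "indep_var (Pi\<^sub>M (Some ` I) (\<lambda>_. borel)) (\<lambda>\<omega>. restrict (\<lambda>j. V j \<omega>) (Some ` I))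
                  (Pi\<^sub>M {None} (\<lambda>_. borel)) (\<lambda>\<omega>. restrict (\<lambda>j. V j \<omega>) {None})"
    using indep \<open>I \<subseteq> J\<close> unfolding V_def by (intro indep_var_restrict) auto
  then have "indep_var borel ((\<lambda>f. \<Sum>i\<in>I. f (Some i)) \<circ> (\<lambda>\<omega>. restrict (\<lambda>j. V j \<omega>) (Some ` I)))
                  borel ((\<lambda>f. f None) \<circ> (\<lambda>\<omega>. restrict (\<lambda>j. V j \<omega>) {None}))"
  proof (rule indep_var_compose)
    show "(\<lambda>f. \<Sum>i\<in>I. f (Some i)) \<in> borel_measurable (Pi\<^sub>M (Some ` I) (\<lambda>_. borel :: real measure))"
      by (intro borel_measurable_sum measurable_component_singleton) auto
    show "(\<lambda>f. f None) \<in> measurable (Pi\<^sub>M {None} (\<lambda>_. borel :: real measure)) borel"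
      by (rule measurable_component_singleton) auto
  qed
  then show ?thesis
    by (simp add: V_def comp_def)
qed

section \<open>Uniform smoothing and divergence from a Gaussian\<close>

lemma (in prob_space) uniform_centered_moments:
  fixes U :: "'a \<Rightarrow> real"
  assumes U: "random_variable borel U"
    and unif: "distr M lborel U = uniform_measure lborel {-1/2<..<1/2}"
  shows "AE \<omega> in M. \<bar>U \<omega>\<bar> < 1/2"
    and "integrable M U" and "integrable M (\<lambda>\<omega>. (U \<omega>)\<^sup>2)"
    and "expectation U = 0" and "expectation (\<lambda>\<omega>. (U \<omega>)\<^sup>2) = 1/12"
proof -
  have U_lborel: "U \<in> measurable M lborel"
    using U by simp
  have "AE x in distr M lborel U. x \<in> {-1/2<..<1/2::real}"
    unfolding unif by (subst AE_uniform_measure) auto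
  then show bounded: "AE \<omega> in M. \<bar>U \<omega>\<bar> < 1/2"
    by (rule AE_mp[OF AE_distrD[OF U_lborel]]) auto
  show "integrable M U"
    using bounded U by (intro integrable_const_bound[where B="1/2"]) auto
  have "AE \<omega> in M. norm ((U \<omega>)\<^sup>2) \<le> 1"
    using bounded by eventually_elim (auto simp: abs_square_le_1)
  then show "integrable M (\<lambda>\<omega>. (U \<omega>)\<^sup>2)"
    using U by (intro integrable_const_bound[where B=1]) auto
  have "distributed M lborel U (\<lambda>x. indicator {-1/2..1/2::real} x / measure lborel {-1/2..1/2::real})"
    unfolding distributed_def
  proof (intro conjI)
    have "AE x in lborel. x \<noteq> (-1/2::real)" "AE x in lborel. x \<noteq> (1/2::real)"
      by (rule AE_lborel_singleton)+
    then have "AE x in lborel. indicator {-1/2<..<1/2::real} x / emeasure lborel {-1/2<..<1/2::real}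
                 = ennreal (indicator {-1/2..1/2::real} x / measure lborel {-1/2..1/2::real})"
      by eventually_elim (auto simp: indicator_def)
    then show "distr M lborel U
        = density lborel (\<lambda>x. indicator {-1/2..1/2::real} x / measure lborel {-1/2..1/2::real})"
      unfolding unif uniform_measure_def by (intro density_cong) auto
  qed (use U in auto)
  from uniform_distributed_expectation[OF this] uniform_distributed_variance[OF this]
  show "expectation U = 0" and "expectation (\<lambda>\<omega>. (U \<omega>)\<^sup>2) = 1/12"
    by simp_all
qed

lemma measurable_round_affine [measurable]:
  "(\<lambda>t::real. round ((t - b) / d)) \<in> measurable borel (count_space UNIV)"
  unfolding round_def by measurable

lemma sets_round_cell [measurable]: "{t::real. round ((t - b) / d) = k} \<in> sets borel"
  using measurable_sets[OF measurable_round_affine[of b d], of "{k}"] by (simp add: vimage_def)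

lemma round_add_int_iff:
  fixes u :: real and k :: int
  assumes "u \<noteq> -1/2" "u \<noteq> 1/2"
  shows "round (of_int k + u) = k \<longleftrightarrow> u \<in> {-1/2<..<1/2}"
proof
  assume "round (of_int k + u) = k"
  then have "\<bar>u\<bar> \<le> 1/2"
    using of_int_round_abs_le[of "of_int k + u"] by simp
  then show "u \<in> {-1/2<..<1/2}"
    using assms by auto
qed (auto intro: round_unique')

lemma nn_integral_round_cell:
  fixes b d :: real and k :: int
  assumes d: "d > 0" and A [measurable]: "A \<in> sets borel"
  shows "(\<integral>\<^sup>+t. indicator A t * indicator {t. round ((t - b) / d) = k} t \<partial>lborel)
           = d * (\<integral>\<^sup>+u. indicator A (b + of_int k * d + d * u) * indicator {-1/2<..<1/2::real} u \<partial>lborel)"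
proof -
  define x where "x = b + of_int k * d"
  have "(\<integral>\<^sup>+t. indicator A t * indicator {t. round ((t - b) / d) = k} t \<partial>lborel)
          = \<bar>d\<bar> * (\<integral>\<^sup>+u. indicator A (x + d * u) * indicator {t. round ((t - b) / d) = k} (x + d * u) \<partial>lborel)"
    using d by (intro nn_integral_real_affine) auto
  also have "(\<integral>\<^sup>+u. indicator A (x + d * u) * indicator {t. round ((t - b) / d) = k} (x + d * u) \<partial>lborel)
               = (\<integral>\<^sup>+u. indicator A (x + d * u) * indicator {-1/2<..<1/2::real} u \<partial>lborel)"
  proof (rule nn_integral_cong_AE)
    have "AE u in lborel. u \<noteq> (-1/2::real)" "AE u in lborel. u \<noteq> (1/2::real)"
      by (rule AE_lborel_singleton)+
    then show "AE u in lborel. indicator A (x + d * u) * indicator {t. round ((t - b) / d) = k} (x + d * u)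
                 = (indicator A (x + d * u) * indicator {-1/2<..<1/2::real} u :: ennreal)"
    proof eventually_elim
      case (elim u)
      have "(x + d * u - b) / d = of_int k + u"
        using d by (simp add: x_def field_simps)
      then show ?case
        using round_add_int_iff[OF elim, of k] by (simp add: indicator_def)
    qed
  qed
  finally show ?thesis
    using d by (simp add: x_def)
qed

lemma emeasure_density_round_step:
  fixes f :: "int \<Rightarrow> real" and b d :: real
  assumes d: "d > 0" and f_nonneg: "\<And>k. 0 \<le> f k" and A [measurable]: "A \<in> sets borel"
  shows "emeasure (density lborel (\<lambda>t. ennreal (f (round ((t - b) / d)) / d))) A
           = (\<Sum>m. (\<integral>\<^sup>+u. indicator A (b + of_int (int_decode m) * d + d * u) * indicator {-1/2<..<1/2::real} u \<partial>lborel)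
                    * ennreal (f (int_decode m)))"
proof -
  define J where "J k = {t::real. round ((t - b) / d) = k}" for k
  have [measurable]: "J k \<in> sets borel" for k
    unfolding J_def by (rule sets_round_cell)
  have "emeasure (density lborel (\<lambda>t. ennreal (f (round ((t - b) / d)) / d))) A
          = (\<integral>\<^sup>+t. ennreal (f (round ((t - b) / d)) / d) * indicator A t \<partial>lborel)"
    by (rule emeasure_density) (auto intro: measurable_compose[OF measurable_round_affine])
  also have "\<dots> = (\<integral>\<^sup>+t. (\<Sum>m. ennreal (f (int_decode m) / d) * (indicator A t * indicator (J (int_decode m)) t)) \<partial>lborel)"
  proof (rule nn_integral_cong)
    fix t :: real
    have "(\<Sum>m. ennreal (f (int_decode m) / d) * (indicator A t * indicator (J (int_decode m)) t))
            = (\<Sum>m\<in>{int_encode (round ((t - b) / d))}. ennreal (f (int_decode m) / d) * (indicator A t * indicator (J (int_decode m)) t))"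
      by (rule suminf_finite) (auto simp: J_def indicator_def)
    then show "ennreal (f (round ((t - b) / d)) / d) * indicator A t
                 = (\<Sum>m. ennreal (f (int_decode m) / d) * (indicator A t * indicator (J (int_decode m)) t))"
      by (simp add: J_def indicator_def)
  qed
  also have "\<dots> = (\<Sum>m. \<integral>\<^sup>+t. ennreal (f (int_decode m) / d) * (indicator A t * indicator (J (int_decode m)) t) \<partial>lborel)"
    by (rule nn_integral_suminf) measurable
  also have "\<dots> = (\<Sum>m. (\<integral>\<^sup>+u. indicator A (b + of_int (int_decode m) * d + d * u) * indicator {-1/2<..<1/2::real} u \<partial>lborel)
                          * ennreal (f (int_decode m)))"
  proof (rule suminf_cong)
    fix m
    define k where "k = int_decode m"
    have "(\<integral>\<^sup>+t. ennreal (f k / d) * (indicator A t * indicator (J k) t) \<partial>lborel)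
            = ennreal (f k / d) * (\<integral>\<^sup>+t. indicator A t * indicator (J k) t \<partial>lborel)"
      by (rule nn_integral_cmult) measurable
    also have "\<dots> = ennreal (f k / d) * ennreal d
                      * (\<integral>\<^sup>+u. indicator A (b + of_int k * d + d * u) * indicator {-1/2<..<1/2::real} u \<partial>lborel)"
      unfolding J_def nn_integral_round_cell[OF d A] by (simp add: mult.assoc)
    also have "ennreal (f k / d) * ennreal d = ennreal (f k)"
      using d f_nonneg[of k] by (simp flip: ennreal_mult)
    finally show "(\<integral>\<^sup>+t. ennreal (f k / d) * (indicator A t * indicator (J k) t) \<partial>lborel)
                 = (\<integral>\<^sup>+u. indicator A (b + of_int k * d + d * u) * indicator {-1/2<..<1/2::real} u \<partial>lborel)
                    * ennreal (f k)"
      by (simp add: mult.commute)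
  qed
  finally show ?thesis .
qed

lemma (in prob_space) KL_divergence_eq_expectation_ln_ratio:
  fixes Z :: "'a \<Rightarrow> real" and f g :: "real \<Rightarrow> real"
  assumes Z [measurable]: "random_variable borel Z"
    and distr_Z: "distr M lborel Z = density lborel f"
    and f [measurable]: "f \<in> borel_measurable borel" and f_nonneg: "\<And>t. 0 \<le> f t"
    and g [measurable]: "g \<in> borel_measurable borel" and g_pos: "\<And>t. 0 < g t"
  shows "KL_divergence (exp 1) (density lborel g) (distr M lborel Z)
           = expectation (\<lambda>\<omega>. ln (f (Z \<omega>) / g (Z \<omega>)))"
proof -
  have "KL_divergence (exp 1) (density lborel g) (distr M lborel Z) = (\<integral>t. f t * ln (f t / g t) \<partial>lborel)"
    unfolding distr_Z using f_nonneg g_pos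
    by (subst lborel.KL_density_density) (auto simp: less_le log_ln)
  also have "\<dots> = (\<integral>t. ln (f t / g t) \<partial>density lborel f)"
    by (subst integral_density) (auto simp: f_nonneg)
  also have "\<dots> = expectation (\<lambda>\<omega>. ln (f (Z \<omega>) / g (Z \<omega>)))"
    unfolding distr_Z[symmetric] by (rule integral_distr) auto
  finally show ?thesis .
qed

lemma (in prob_space) dkl_cont_eq_expectation_ln_density:
  fixes Z :: "'a \<Rightarrow> real" and f :: "real \<Rightarrow> real"
  assumes Z [measurable]: "random_variable borel Z"
    and distr_Z: "distr M lborel Z = density lborel f"
    and f [measurable]: "f \<in> borel_measurable borel" and f_nonneg: "\<And>t. 0 \<le> f t"
    and sq_int: "integrable M (\<lambda>\<omega>. (Z \<omega>)\<^sup>2)" and var_pos: "rv_var M Z > 0"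
    and ln_int: "integrable M (\<lambda>\<omega>. ln (f (Z \<omega>)))"
  shows "dkl_cont M Z = ln (sqrt (2 * pi * rv_var M Z)) + 1/2 + expectation (\<lambda>\<omega>. ln (f (Z \<omega>)))"
proof -
  define \<mu> where "\<mu> = rv_mean M Z"
  define v where "v = rv_var M Z"
  define g where "g = normal_density \<mu> (sqrt v)"
  have v: "v > 0"
    using var_pos by (simp add: v_def)
  have g_pos: "0 < g t" for t
    using v by (simp add: g_def normal_density_pos)
  have ln_g: "ln (g t) = - ln (sqrt (2 * pi * v)) - (t - \<mu>)\<^sup>2 / (2 * v)" for t
    using v by (simp add: g_def normal_density_def ln_mult ln_div)
  have Z_int: "integrable M Z"
    using square_integrable_imp_integrable[OF Z sq_int] .
  have centered_sq_int: "integrable M (\<lambda>\<omega>. (Z \<omega> - \<mu>)\<^sup>2)"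
    using sq_int Z_int by (simp add: power2_diff)
  have "AE t in density lborel f. 0 < f t"
    by (subst AE_density) auto
  then have f_Z_pos: "AE \<omega> in M. 0 < f (Z \<omega>)"
    unfolding distr_Z[symmetric] by (rule AE_distrD[rotated]) simp
  have "dkl_cont M Z = expectation (\<lambda>\<omega>. ln (f (Z \<omega>) / g (Z \<omega>)))"
    unfolding dkl_cont_def \<mu>_def[symmetric] v_def[symmetric] g_def[symmetric]
    using distr_Z f_nonneg g_pos by (intro KL_divergence_eq_expectation_ln_ratio) (auto simp: g_def)
  also have "\<dots> = expectation (\<lambda>\<omega>. ln (f (Z \<omega>)) + ln (sqrt (2 * pi * v)) + (Z \<omega> - \<mu>)\<^sup>2 / (2 * v))"
  proof (rule integral_cong_AE)
    show "AE \<omega> in M. ln (f (Z \<omega>) / g (Z \<omega>)) = ln (f (Z \<omega>)) + ln (sqrt (2 * pi * v)) + (Z \<omega> - \<mu>)\<^sup>2 / (2 * v)"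
      using f_Z_pos by eventually_elim (simp add: ln_div g_pos less_imp_neq[OF g_pos, symmetric] ln_g)
  qed (use ln_int in \<open>auto simp: g_def\<close>)
  also have "\<dots> = expectation (\<lambda>\<omega>. ln (f (Z \<omega>))) + ln (sqrt (2 * pi * v)) + expectation (\<lambda>\<omega>. (Z \<omega> - \<mu>)\<^sup>2) / (2 * v)"
    using ln_int centered_sq_int by (simp add: prob_space)
  also have "expectation (\<lambda>\<omega>. (Z \<omega> - \<mu>)\<^sup>2) = v"
    by (simp add: v_def \<mu>_def rv_var_def)
  finally show ?thesis
    using v by (simp add: v_def)
qed

section \<open>Lattice random variables\<close>

locale lattice_rv = prob_space M
  for M :: "'a measure" and Y :: "'a \<Rightarrow> real" and b d :: real +
  assumes Y_measurable [measurable]: "Y \<in> borel_measurable M"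
    and spacing_pos: "0 < d"
    and Y_on_lattice: "\<And>\<omega>. \<omega> \<in> space M \<Longrightarrow> \<exists>k::int. Y \<omega> = b + of_int k * d"
begin

text \<open>The lattice \<open>b + d\<int>\<close> is enumerated via \<open>int_decode\<close>, so that sums over it become
  ordinary series.\<close>
definition node :: "nat \<Rightarrow> real" where
  "node m = b + of_int (int_decode m) * d"

abbreviation mass :: "nat \<Rightarrow> real" where
  "mass m \<equiv> pmass M Y (node m)"

lemma inj_node: "inj node"
  using spacing_pos by (auto simp: node_def inj_def int_decode_eq)

lemma Y_in_range_node:
  assumes "\<omega> \<in> space M"
  shows "Y \<omega> \<in> range node"
proof -
  obtain k :: int where "Y \<omega> = b + of_int k * d"
    using Y_on_lattice[OF assms] by blast
  then have "Y \<omega> = node (int_encode k)"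
    by (simp add: node_def)
  then show ?thesis by blast
qed

lemma mass_nonneg: "0 \<le> mass m"
  by (rule pmass_nonneg)

lemma mass_le_1: "mass m \<le> 1"
  by (rule pmass_le_1)

lemma nn_integral_comp_Y:
  "(\<integral>\<^sup>+\<omega>. h (Y \<omega>) \<partial>M) = (\<Sum>m. h (node m) * ennreal (mass m))"
proof -
  have level_sets: "{\<omega> \<in> space M. Y \<omega> = c} \<in> sets M" for c
    by measurable
  have "(\<integral>\<^sup>+\<omega>. h (Y \<omega>) \<partial>M)
          = (\<integral>\<^sup>+\<omega>. (\<Sum>m. h (node m) * indicator {\<omega> \<in> space M. Y \<omega> = node m} \<omega>) \<partial>M)"
  proof (rule nn_integral_cong)
    fix \<omega> assume \<omega>: "\<omega> \<in> space M"
    then obtain m0 where m0: "Y \<omega> = node m0"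
      using Y_in_range_node by blast
    have "(\<Sum>m. h (node m) * indicator {\<omega> \<in> space M. Y \<omega> = node m} \<omega>)
            = (\<Sum>m\<in>{m0}. h (node m) * indicator {\<omega> \<in> space M. Y \<omega> = node m} \<omega>)"
      by (rule suminf_finite) (use \<omega> m0 inj_node in \<open>auto simp: indicator_def inj_eq\<close>)
    then show "h (Y \<omega>) = (\<Sum>m. h (node m) * indicator {\<omega> \<in> space M. Y \<omega> = node m} \<omega>)"
      using m0 \<omega> by simp
  qed
  also have "\<dots> = (\<Sum>m. \<integral>\<^sup>+\<omega>. h (node m) * indicator {\<omega> \<in> space M. Y \<omega> = node m} \<omega> \<partial>M)"
    by (subst nn_integral_suminf) (use level_sets in auto)
  also have "\<dots> = (\<Sum>m. h (node m) * ennreal (mass m))"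
    by (intro suminf_cong) (simp add: nn_integral_cmult_indicator level_sets pmass_def emeasure_eq_measure)
  finally show ?thesis .
qed

lemma measurable_comp_Y:
  fixes h :: "real \<Rightarrow> 'b::topological_space"
  shows "(\<lambda>\<omega>. h (Y \<omega>)) \<in> borel_measurable M"
proof -
  have index: "(\<lambda>\<omega>. inv node (Y \<omega>)) \<in> measurable M (count_space UNIV)"
  proof (subst measurable_count_space_eq_countable, simp, safe)
    fix m
    have "(\<lambda>\<omega>. inv node (Y \<omega>)) -` {m} \<inter> space M = {\<omega> \<in> space M. Y \<omega> = node m}"
      using Y_in_range_node inj_node by (auto simp: inv_f_f f_inv_into_f)
    also have "\<dots> \<in> sets M"
      by measurable
    finally show "(\<lambda>\<omega>. inv node (Y \<omega>)) -` {m} \<inter> space M \<in> sets M" .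
  qed simp
  have "(\<lambda>\<omega>. h (node (inv node (Y \<omega>)))) \<in> borel_measurable M"
    using measurable_compose[OF index, of "\<lambda>m. h (node m)" borel] by simp
  then show ?thesis
    by (rule measurable_cong[THEN iffD1, rotated]) (use Y_in_range_node in \<open>auto simp: f_inv_into_f\<close>)
qed

lemma
  fixes h :: "real \<Rightarrow> real"
  assumes h_nonneg: "\<And>y. 0 \<le> h y"
  shows integrable_comp_Y_iff: "integrable M (\<lambda>\<omega>. h (Y \<omega>)) \<longleftrightarrow> summable (\<lambda>m. h (node m) * mass m)"
    and integral_comp_Y: "summable (\<lambda>m. h (node m) * mass m) \<Longrightarrow>
          expectation (\<lambda>\<omega>. h (Y \<omega>)) = (\<Sum>m. h (node m) * mass m)"
proof -
  have terms_nonneg: "0 \<le> h (node m) * mass m" for m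
    using h_nonneg mass_nonneg by simp
  have nn_eq: "(\<integral>\<^sup>+\<omega>. ennreal (h (Y \<omega>)) \<partial>M) = (\<Sum>m. ennreal (h (node m) * mass m))"
    using nn_integral_comp_Y[of "\<lambda>y. ennreal (h y)"] by (simp add: ennreal_mult h_nonneg mass_nonneg)
  have meas: "(\<lambda>\<omega>. h (Y \<omega>)) \<in> borel_measurable M"
    by (rule measurable_comp_Y)
  show "integrable M (\<lambda>\<omega>. h (Y \<omega>)) \<longleftrightarrow> summable (\<lambda>m. h (node m) * mass m)"
  proof
    assume "integrable M (\<lambda>\<omega>. h (Y \<omega>))"
    then have "(\<integral>\<^sup>+\<omega>. ennreal (h (Y \<omega>)) \<partial>M) = ennreal (expectation (\<lambda>\<omega>. h (Y \<omega>)))"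
      by (rule nn_integral_eq_integral) (simp add: h_nonneg)
    then show "summable (\<lambda>m. h (node m) * mass m)"
      using nn_eq by (intro summable_suminf_not_top[OF terms_nonneg]) simp
  next
    assume "summable (\<lambda>m. h (node m) * mass m)"
    then have "(\<integral>\<^sup>+\<omega>. ennreal (h (Y \<omega>)) \<partial>M) < \<infinity>"
      unfolding nn_eq using ennreal_suminf_neq_top terms_nonneg by (simp add: top.not_eq_extremum)
    then show "integrable M (\<lambda>\<omega>. h (Y \<omega>))"
      by (intro integrableI_nonneg meas) (auto simp: h_nonneg)
  qed
  assume summable: "summable (\<lambda>m. h (node m) * mass m)"
  have "expectation (\<lambda>\<omega>. h (Y \<omega>)) = enn2real (\<integral>\<^sup>+\<omega>. ennreal (h (Y \<omega>)) \<partial>M)"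
    using meas h_nonneg by (intro integral_eq_nn_integral) auto
  also have "\<dots> = (\<Sum>m. h (node m) * mass m)"
    unfolding nn_eq by (subst suminf_ennreal2[OF terms_nonneg summable]) (simp add: suminf_nonneg[OF summable terms_nonneg])
  finally show "expectation (\<lambda>\<omega>. h (Y \<omega>)) = (\<Sum>m. h (node m) * mass m)" .
qed

lemma summable_mass: "summable mass"
  using integrable_comp_Y_iff[of "\<lambda>_. 1"] by simp

lemma suminf_mass: "(\<Sum>m. mass m) = 1"
  using integral_comp_Y[of "\<lambda>_. 1"] summable_mass by (simp add: prob_space)

lemma AE_mass_pos: "AE \<omega> in M. pmass M Y (Y \<omega>) > 0"
proof -
  define h :: "real \<Rightarrow> ennreal" where "h y = (if pmass M Y y = 0 then 1 else 0)" for y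
  have "(\<lambda>m. h (node m) * ennreal (mass m)) = (\<lambda>_. 0)"
    by (auto simp: h_def fun_eq_iff)
  then have "(\<integral>\<^sup>+\<omega>. h (Y \<omega>) \<partial>M) = 0"
    unfolding nn_integral_comp_Y by simp
  then have "AE \<omega> in M. h (Y \<omega>) = 0"
    by (subst nn_integral_0_iff_AE[symmetric]) (auto intro: measurable_comp_Y)
  then show ?thesis
    by eventually_elim (use pmass_nonneg in \<open>auto simp: h_def less_le split: if_splits\<close>)
qed

lemma summable_entropy_of_abs_moment:
  assumes "summable (\<lambda>m. \<bar>node m\<bar> * mass m)"
  shows "summable (\<lambda>m. - (mass m * ln (mass m)))"
proof (rule summable_entropy_int_decode[OF mass_nonneg mass_le_1])
  show "summable (\<lambda>m. \<bar>real_of_int (int_decode m)\<bar> * mass m)"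
  proof (rule summable_comparison_test')
    show "summable (\<lambda>m. (1 / d) * (\<bar>node m\<bar> * mass m) + (\<bar>b\<bar> / d) * mass m)"
      by (intro summable_add summable_mult assms summable_mass)
  next
    fix m
    have "\<bar>real_of_int (int_decode m)\<bar> = \<bar>node m - b\<bar> / d"
      using spacing_pos by (simp add: node_def abs_mult)
    also have "\<dots> \<le> (\<bar>node m\<bar> + \<bar>b\<bar>) / d"
      using spacing_pos by (intro divide_right_mono abs_triangle_ineq4) simp
    finally have "\<bar>real_of_int (int_decode m)\<bar> * mass m \<le> (\<bar>node m\<bar> + \<bar>b\<bar>) / d * mass m"
      by (rule mult_right_mono[OF _ mass_nonneg])
    then show "norm (\<bar>real_of_int (int_decode m)\<bar> * mass m)
                 \<le> (1 / d) * (\<bar>node m\<bar> * mass m) + (\<bar>b\<bar> / d) * mass m"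
      using mass_nonneg[of m] by (simp add: add_divide_distrib distrib_right)
  qed
qed

lemma disc_entropy_eq_suminf:
  assumes "summable (\<lambda>m. - (mass m * ln (mass m)))"
  shows "disc_entropy M Y = (\<Sum>m. - (mass m * ln (mass m)))"
proof -
  define h where "h y = - pmass M Y y * ln (pmass M Y y)" for y
  have "disc_entropy M Y = infsum h (range node)"
    unfolding disc_entropy_def h_def
    by (rule infsum_cong_neutral) (auto intro!: pmass_eq_0 dest: Y_in_range_node)
  also have "\<dots> = infsum (h \<circ> node) UNIV"
    by (rule infsum_reindex[OF inj_node])
  also have "\<dots> = (\<Sum>m. - (mass m * ln (mass m)))"
  proof -
    have "\<bar>- (mass m * ln (mass m))\<bar> = - (mass m * ln (mass m))" for m
      using mult_ln_nonpos[OF mass_nonneg mass_le_1] by simp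
    then have "summable (\<lambda>m. \<bar>(h \<circ> node) m\<bar>)"
      using assms by (simp add: h_def)
    then show ?thesis
      by (subst infsum_eq_suminf_abs_summable) (simp_all add: h_def o_def)
  qed
  finally show ?thesis .
qed

lemma emeasure_distr_add_scaled_indep:
  fixes U :: "'a \<Rightarrow> real"
  assumes indep: "indep_var borel Y borel U" and A [measurable]: "A \<in> sets borel"
  shows "emeasure (distr M lborel (\<lambda>\<omega>. Y \<omega> + d * U \<omega>)) A
           = (\<Sum>m. (\<integral>\<^sup>+u. indicator A (node m + d * u) \<partial>distr M borel U) * ennreal (mass m))"
proof -
  have U [measurable]: "U \<in> borel_measurable M"
    using indep by (simp add: indep_var_distribution_eq)
  interpret U: prob_space "distr M borel U"
    by (rule prob_space_distr) simp
  define F :: "real \<times> real \<Rightarrow> ennreal" where "F z = indicator A (fst z + d * snd z)" for z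
  have [measurable]: "F \<in> borel_measurable (borel \<Otimes>\<^sub>M borel)"
    unfolding F_def by measurable
  have "emeasure (distr M lborel (\<lambda>\<omega>. Y \<omega> + d * U \<omega>)) A
          = (\<integral>\<^sup>+x. indicator A x \<partial>distr M lborel (\<lambda>\<omega>. Y \<omega> + d * U \<omega>))"
    by simp
  also have "\<dots> = (\<integral>\<^sup>+\<omega>. F (Y \<omega>, U \<omega>) \<partial>M)"
    by (subst nn_integral_distr) (auto simp: F_def)
  also have "\<dots> = (\<integral>\<^sup>+z. F z \<partial>distr M (borel \<Otimes>\<^sub>M borel) (\<lambda>\<omega>. (Y \<omega>, U \<omega>)))"
    by (subst nn_integral_distr) auto
  also have "distr M (borel \<Otimes>\<^sub>M borel) (\<lambda>\<omega>. (Y \<omega>, U \<omega>)) = distr M borel Y \<Otimes>\<^sub>M distr M borel U"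
    using indep by (simp add: indep_var_distribution_eq)
  also have "(\<integral>\<^sup>+z. F z \<partial>(distr M borel Y \<Otimes>\<^sub>M distr M borel U))
               = (\<integral>\<^sup>+y. (\<integral>\<^sup>+u. F (y, u) \<partial>distr M borel U) \<partial>distr M borel Y)"
    by (rule U.nn_integral_fst[symmetric]) simp
  also have "\<dots> = (\<integral>\<^sup>+\<omega>. (\<integral>\<^sup>+u. F (Y \<omega>, u) \<partial>distr M borel U) \<partial>M)"
    by (subst nn_integral_distr) (auto intro: U.borel_measurable_nn_integral_fst)
  also have "\<dots> = (\<Sum>m. (\<integral>\<^sup>+u. indicator A (node m + d * u) \<partial>distr M borel U) * ennreal (mass m))"
    using nn_integral_comp_Y[of "\<lambda>y. \<integral>\<^sup>+u. indicator A (y + d * u) \<partial>distr M borel U"]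
    by (simp add: F_def)
  finally show ?thesis .
qed

lemma distr_add_scaled_uniform:
  fixes U :: "'a \<Rightarrow> real"
  assumes indep: "indep_var borel Y borel U"
    and unif: "distr M lborel U = uniform_measure lborel {-1/2<..<1/2}"
  shows "distr M lborel (\<lambda>\<omega>. Y \<omega> + d * U \<omega>)
           = density lborel (\<lambda>t. ennreal (pmass M Y (b + of_int (round ((t - b) / d)) * d) / d))"
proof (rule measure_eqI)
  fix A assume "A \<in> sets (distr M lborel (\<lambda>\<omega>. Y \<omega> + d * U \<omega>))"
  then have A [measurable]: "A \<in> sets borel"
    by simp
  have "distr M borel U = uniform_measure lborel {-1/2<..<1/2}"
    unfolding unif[symmetric] by (rule distr_cong) auto
  then have cell: "(\<integral>\<^sup>+u. indicator A (x + d * u) \<partial>distr M borel U)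
                     = (\<integral>\<^sup>+u. indicator A (x + d * u) * indicator {-1/2<..<1/2::real} u \<partial>lborel)" for x
    by (simp add: nn_integral_uniform_measure divide_ennreal_def)
  have step: "emeasure (density lborel (\<lambda>t. ennreal (pmass M Y (b + of_int (round ((t - b) / d)) * d) / d))) A
      = (\<Sum>m. (\<integral>\<^sup>+u. indicator A (node m + d * u) * indicator {-1/2<..<1/2::real} u \<partial>lborel) * ennreal (mass m))"
    using emeasure_density_round_step[OF spacing_pos _ A, of "\<lambda>k. pmass M Y (b + of_int k * d)" b]
    by (simp add: pmass_nonneg node_def)
  show "emeasure (distr M lborel (\<lambda>\<omega>. Y \<omega> + d * U \<omega>)) A
          = emeasure (density lborel (\<lambda>t. ennreal (pmass M Y (b + of_int (round ((t - b) / d)) * d) / d))) A"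
    unfolding emeasure_distr_add_scaled_indep[OF indep A] step cell ..
qed simp


lemma AE_round_add_scaled_uniform:
  fixes U :: "'a \<Rightarrow> real"
  assumes "AE \<omega> in M. \<bar>U \<omega>\<bar> < 1/2"
  shows "AE \<omega> in M. b + of_int (round ((Y \<omega> + d * U \<omega> - b) / d)) * d = Y \<omega>"
  using assms AE_space
proof eventually_elim
  case (elim \<omega>)
  obtain k :: int where k: "Y \<omega> = b + of_int k * d"
    using Y_on_lattice[OF elim(2)] by blast
  have "(Y \<omega> + d * U \<omega> - b) / d = of_int k + U \<omega>"
    using spacing_pos by (simp add: k field_simps)
  then have "round ((Y \<omega> + d * U \<omega> - b) / d) = k"
    using elim(1) by (intro round_unique') simp
  then show ?case
    by (simp add: k)
qed

end

locale std_lattice_rv = lattice_rv +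
  assumes Y_square_integrable: "integrable M (\<lambda>\<omega>. (Y \<omega>)\<^sup>2)"
    and Y_mean: "rv_mean M Y = 0"
    and Y_var: "rv_var M Y = 1"
begin

lemma expectation_Y: "expectation Y = 0"
  using Y_mean by (simp add: rv_mean_def)

lemma expectation_Y_square: "expectation (\<lambda>\<omega>. (Y \<omega>)\<^sup>2) = 1"
  using Y_mean Y_var by (simp add: rv_mean_def rv_var_def)

lemma summable_second_moment: "summable (\<lambda>m. (node m)\<^sup>2 * mass m)"
  using integrable_comp_Y_iff[of power2] Y_square_integrable by simp

lemma suminf_second_moment: "(\<Sum>m. (node m)\<^sup>2 * mass m) = 1"
  using integral_comp_Y[of power2] summable_second_moment expectation_Y_square by simp

lemma
  shows summable_abs_moment: "summable (\<lambda>m. \<bar>node m\<bar> * mass m)"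
    and suminf_abs_moment_le: "(\<Sum>m. \<bar>node m\<bar> * mass m) \<le> 1"
proof -
  have integrable: "integrable M (\<lambda>\<omega>. \<bar>Y \<omega>\<bar>)"
    using square_integrable_imp_integrable[OF Y_measurable Y_square_integrable] by simp
  then show summable: "summable (\<lambda>m. \<bar>node m\<bar> * mass m)"
    using integrable_comp_Y_iff[of abs] by simp
  have "expectation (\<lambda>\<omega>. \<bar>Y \<omega>\<bar>) \<le> expectation (\<lambda>\<omega>. 1/2 + (Y \<omega>)\<^sup>2 / 2)"
  proof (rule integral_mono[OF integrable])
    show "integrable M (\<lambda>\<omega>. 1/2 + (Y \<omega>)\<^sup>2 / 2)"
      using Y_square_integrable by simp
    show "\<bar>Y \<omega>\<bar> \<le> 1/2 + (Y \<omega>)\<^sup>2 / 2" for \<omega>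
      using sum_squares_ge_zero[of "\<bar>Y \<omega>\<bar> - 1" 0]
      by (simp add: power2_eq_square algebra_simps abs_mult_self_eq)
  qed
  also have "\<dots> = 1"
    using Y_square_integrable expectation_Y_square by (simp add: prob_space)
  finally show "(\<Sum>m. \<bar>node m\<bar> * mass m) \<le> 1"
    using integral_comp_Y[of abs] summable by simp
qed

lemma summable_entropy: "summable (\<lambda>m. - (mass m * ln (mass m)))"
  by (rule summable_entropy_of_abs_moment[OF summable_abs_moment])

text \<open>The denominator \<open>q\<close> of \<open>dkl_lattice\<close>: the Gaussian with the moments of \<open>Y\<close> is \<open>N(0, 1)\<close>.\<close>
definition cell_mass :: "nat \<Rightarrow> real" where
  "cell_mass m = (LBINT t=node m..node m + d. normal_density 0 1 t)"

lemma cell_mass_pos: "cell_mass m > 0"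
  unfolding cell_mass_def by (rule normal_cell_mass_pos[OF spacing_pos])

definition cell_error :: "nat \<Rightarrow> real" where
  "cell_error m = ln (cell_mass m) - (ln d - ln (sqrt (2 * pi)) - (node m)\<^sup>2 / 2)"

lemma abs_mass_cell_error_le:
  "\<bar>mass m * cell_error m\<bar> \<le> d * (\<bar>node m\<bar> * mass m) + d\<^sup>2 / 2 * mass m"
proof -
  have "\<bar>mass m * cell_error m\<bar> = mass m * \<bar>cell_error m\<bar>"
    by (simp add: abs_mult mass_nonneg)
  also have "\<dots> \<le> mass m * (\<bar>node m\<bar> * d + d\<^sup>2 / 2)"
    unfolding cell_error_def cell_mass_def
    by (intro mult_left_mono ln_normal_cell_mass_approx spacing_pos mass_nonneg)
  finally show ?thesis
    by (simp add: algebra_simps)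
qed

lemma
  shows summable_abs_mass_cell_error: "summable (\<lambda>m. \<bar>mass m * cell_error m\<bar>)"
    and abs_suminf_mass_cell_error_le: "\<bar>\<Sum>m. mass m * cell_error m\<bar> \<le> d + d\<^sup>2 / 2"
proof -
  have summable_bound: "summable (\<lambda>m. d * (\<bar>node m\<bar> * mass m) + d\<^sup>2 / 2 * mass m)"
    by (intro summable_add summable_mult summable_abs_moment summable_mass)
  show summable: "summable (\<lambda>m. \<bar>mass m * cell_error m\<bar>)"
    by (rule summable_comparison_test'[OF summable_bound]) (use abs_mass_cell_error_le in simp)
  have "\<bar>\<Sum>m. mass m * cell_error m\<bar> \<le> (\<Sum>m. d * (\<bar>node m\<bar> * mass m) + d\<^sup>2 / 2 * mass m)"
    using summable_rabs[OF summable] suminf_le[OF abs_mass_cell_error_le summable summable_bound]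
    by linarith
  also have "\<dots> = d * (\<Sum>m. \<bar>node m\<bar> * mass m) + d\<^sup>2 / 2"
    using suminf_add[OF summable_mult[OF summable_abs_moment] summable_mult[OF summable_mass]]
    by (simp add: suminf_mult summable_abs_moment summable_mass suminf_mass)
  also have "\<dots> \<le> d + d\<^sup>2 / 2"
    using suminf_abs_moment_le spacing_pos by (simp add: mult_left_le)
  finally show "\<bar>\<Sum>m. mass m * cell_error m\<bar> \<le> d + d\<^sup>2 / 2" .
qed

lemma
  shows summable_abs_mass_ln_cell_mass: "summable (\<lambda>m. \<bar>mass m * ln (cell_mass m)\<bar>)"
    and suminf_mass_ln_cell_mass:
      "(\<Sum>m. mass m * ln (cell_mass m)) = ln d - ln (sqrt (2 * pi)) - 1/2 + (\<Sum>m. mass m * cell_error m)"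
proof -
  define c where "c = ln d - ln (sqrt (2 * pi))"
  have decomposition:
    "mass m * ln (cell_mass m) = c * mass m - 1/2 * ((node m)\<^sup>2 * mass m) + mass m * cell_error m" for m
    by (simp add: cell_error_def c_def algebra_simps)
  show "summable (\<lambda>m. \<bar>mass m * ln (cell_mass m)\<bar>)"
  proof (rule summable_comparison_test')
    show "summable (\<lambda>m. \<bar>c\<bar> * mass m + 1/2 * ((node m)\<^sup>2 * mass m) + \<bar>mass m * cell_error m\<bar>)"
      by (intro summable_add summable_mult summable_mass summable_second_moment summable_abs_mass_cell_error)
  next
    fix m
    have "\<bar>mass m * ln (cell_mass m)\<bar>
            \<le> \<bar>c * mass m\<bar> + \<bar>1/2 * ((node m)\<^sup>2 * mass m)\<bar> + \<bar>mass m * cell_error m\<bar>"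
      unfolding decomposition by linarith
    then show "norm \<bar>mass m * ln (cell_mass m)\<bar>
                 \<le> \<bar>c\<bar> * mass m + 1/2 * ((node m)\<^sup>2 * mass m) + \<bar>mass m * cell_error m\<bar>"
      by (simp add: abs_mult mass_nonneg)
  qed
  have summable_c: "summable (\<lambda>m. c * mass m)"
    and summable_x2: "summable (\<lambda>m. 1/2 * ((node m)\<^sup>2 * mass m))"
    by (intro summable_mult summable_mass summable_second_moment)+
  have "(\<Sum>m. mass m * ln (cell_mass m))
          = (\<Sum>m. c * mass m - 1/2 * ((node m)\<^sup>2 * mass m)) + (\<Sum>m. mass m * cell_error m)"
    unfolding decomposition
    using summable_rabs_cancel[OF summable_abs_mass_cell_error]
    by (intro suminf_add[symmetric] summable_diff summable_c summable_x2)
  also have "(\<Sum>m. c * mass m - 1/2 * ((node m)\<^sup>2 * mass m))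
               = c * (\<Sum>m. mass m) - 1/2 * (\<Sum>m. (node m)\<^sup>2 * mass m)"
    unfolding suminf_diff[OF summable_c summable_x2, symmetric]
      suminf_mult[OF summable_mass] suminf_mult[OF summable_second_moment] ..
  finally show "(\<Sum>m. mass m * ln (cell_mass m)) = ln d - ln (sqrt (2 * pi)) - 1/2 + (\<Sum>m. mass m * cell_error m)"
    by (simp add: suminf_mass suminf_second_moment c_def)
qed

lemma disc_entropy_Y: "disc_entropy M Y = - (\<Sum>m. mass m * ln (mass m))"
  using disc_entropy_eq_suminf[OF summable_entropy] suminf_minus[OF summable_minus[OF summable_entropy]]
  by simp

lemma dkl_lattice_eq:
  "dkl_lattice M Y b d = (\<Sum>m. mass m * ln (mass m)) - (\<Sum>m. mass m * ln (cell_mass m))"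
proof -
  define g where "g k = pmass M Y (b + of_int k * d) * ln (pmass M Y (b + of_int k * d)
      / (LBINT x = b + of_int k * d .. b + (of_int k + 1) * d. normal_density 0 1 x))" for k :: int
  have g_decode: "g (int_decode m) = mass m * ln (mass m) - mass m * ln (cell_mass m)" for m
  proof -
    have "g (int_decode m) = mass m * ln (mass m / cell_mass m)"
      by (simp add: g_def cell_mass_def node_def algebra_simps)
    also have "\<dots> = mass m * ln (mass m) - mass m * ln (cell_mass m)"
      using cell_mass_pos[of m] mass_nonneg[of m]
      by (cases "mass m = 0") (simp_all add: ln_div algebra_simps)
    finally show ?thesis .
  qed
  have summable_mass_ln_mass: "summable (\<lambda>m. mass m * ln (mass m))"
    using summable_minus[OF summable_entropy] by simp
  have "summable (\<lambda>m. \<bar>g (int_decode m)\<bar>)"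
  proof (rule summable_comparison_test')
    show "summable (\<lambda>m. - (mass m * ln (mass m)) + \<bar>mass m * ln (cell_mass m)\<bar>)"
      by (intro summable_add summable_entropy summable_abs_mass_ln_cell_mass)
  next
    fix m
    have "mass m * ln (mass m) \<le> 0"
      by (rule mult_ln_nonpos[OF mass_nonneg mass_le_1])
    then show "norm \<bar>g (int_decode m)\<bar> \<le> - (mass m * ln (mass m)) + \<bar>mass m * ln (cell_mass m)\<bar>"
      unfolding g_decode real_norm_def abs_abs by linarith
  qed
  then have "infsum (\<lambda>m. g (int_decode m)) UNIV = (\<Sum>m. g (int_decode m))"
    by (rule infsum_eq_suminf_abs_summable)
  moreover have "dkl_lattice M Y b d = infsum g UNIV"
    unfolding dkl_lattice_def g_def Y_mean Y_var by simp
  moreover have "infsum g UNIV = infsum (\<lambda>m. g (int_decode m)) UNIV"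
    by (rule infsum_reindex_bij_betw[OF bij_int_decode, symmetric])
  ultimately show ?thesis
    unfolding g_decode using suminf_diff[OF summable_mass_ln_mass] summable_abs_mass_ln_cell_mass
    by (simp add: summable_rabs_cancel)
qed

lemma dkl_lattice_approx:
  "\<bar>dkl_lattice M Y b d - (ln (sqrt (2 * pi)) + 1/2 - ln d - disc_entropy M Y)\<bar> \<le> d + d\<^sup>2 / 2"
  using abs_suminf_mass_cell_error_le
  unfolding dkl_lattice_eq disc_entropy_Y suminf_mass_ln_cell_mass
  by (simp add: abs_minus_commute algebra_simps)

lemma
  fixes U :: "'a \<Rightarrow> real"
  assumes indep: "indep_var borel Y borel U"
    and unif: "distr M lborel U = uniform_measure lborel {-1/2<..<1/2}"
  shows integrable_add_scaled_uniform_square: "integrable M (\<lambda>\<omega>. (Y \<omega> + d * U \<omega>)\<^sup>2)"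
    and expectation_add_scaled_uniform: "expectation (\<lambda>\<omega>. Y \<omega> + d * U \<omega>) = 0"
    and expectation_add_scaled_uniform_square: "expectation (\<lambda>\<omega>. (Y \<omega> + d * U \<omega>)\<^sup>2) = 1 + d\<^sup>2 / 12"
proof -
  have U: "random_variable borel U"
    using indep by (simp add: indep_var_distribution_eq)
  note uniform = uniform_centered_moments[OF U unif]
  have Y_int: "integrable M Y"
    using square_integrable_imp_integrable[OF Y_measurable Y_square_integrable] .
  have YU_int: "integrable M (\<lambda>\<omega>. Y \<omega> * U \<omega>)"
    by (rule indep_var_integrable[OF indep Y_int uniform(2)])
  have YU_expectation: "expectation (\<lambda>\<omega>. Y \<omega> * U \<omega>) = 0"
    using indep_var_lebesgue_integral[OF indep Y_int uniform(2)] expectation_Y by simp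
  have square: "(Y \<omega> + d * U \<omega>)\<^sup>2 = (Y \<omega>)\<^sup>2 + (2 * d) * (Y \<omega> * U \<omega>) + d\<^sup>2 * (U \<omega>)\<^sup>2" for \<omega>
    by (simp add: power2_eq_square algebra_simps)
  show "integrable M (\<lambda>\<omega>. (Y \<omega> + d * U \<omega>)\<^sup>2)"
    unfolding square using Y_square_integrable YU_int uniform(3) by auto
  show "expectation (\<lambda>\<omega>. Y \<omega> + d * U \<omega>) = 0"
    using Y_int uniform(2,4) expectation_Y by simp
  show "expectation (\<lambda>\<omega>. (Y \<omega> + d * U \<omega>)\<^sup>2) = 1 + d\<^sup>2 / 12"
    unfolding square using Y_square_integrable YU_int uniform(3,5) expectation_Y_square YU_expectation
    by simp
qed

lemma
  shows integrable_ln_pmass_Y: "integrable M (\<lambda>\<omega>. ln (pmass M Y (Y \<omega>)))"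
    and expectation_ln_pmass_Y: "expectation (\<lambda>\<omega>. ln (pmass M Y (Y \<omega>))) = - disc_entropy M Y"
proof -
  define h where "h y = - ln (pmass M Y y)" for y
  have h_nonneg: "0 \<le> h y" for y
    using pmass_nonneg[of M Y y] pmass_le_1[of Y y] by (cases "pmass M Y y = 0") (simp_all add: h_def)
  have summable: "summable (\<lambda>m. h (node m) * mass m)"
    using summable_entropy by (simp add: h_def mult.commute)
  have "integrable M (\<lambda>\<omega>. h (Y \<omega>))"
    using integrable_comp_Y_iff[of h, OF h_nonneg] summable by simp
  then show "integrable M (\<lambda>\<omega>. ln (pmass M Y (Y \<omega>)))"
    by (simp add: h_def)
  have "expectation (\<lambda>\<omega>. h (Y \<omega>)) = disc_entropy M Y"
    unfolding integral_comp_Y[of h, OF h_nonneg summable] disc_entropy_eq_suminf[OF summable_entropy]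
    by (simp add: h_def mult.commute)
  then show "expectation (\<lambda>\<omega>. ln (pmass M Y (Y \<omega>))) = - disc_entropy M Y"
    by (simp add: h_def)
qed

text \<open>Adding \<open>d U\<close> spreads each atom of \<open>Y\<close> uniformly over its cell, so almost surely the density
  of \<open>Y + d U\<close> at \<open>Y + d U\<close> is \<open>pmass M Y Y / d\<close>, whose expected logarithm is \<open>- H(Y) - ln d\<close>.\<close>
lemma dkl_cont_add_scaled_uniform:
  fixes U :: "'a \<Rightarrow> real"
  assumes indep: "indep_var borel Y borel U"
    and unif: "distr M lborel U = uniform_measure lborel {-1/2<..<1/2}"
  shows "dkl_cont M (\<lambda>\<omega>. Y \<omega> + d * U \<omega>)
           = ln (sqrt (2 * pi * (1 + d\<^sup>2 / 12))) + 1/2 - ln d - disc_entropy M Y"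
proof -
  have U [measurable]: "U \<in> borel_measurable M"
    using indep by (simp add: indep_var_distribution_eq)
  define Z where "Z = (\<lambda>\<omega>. Y \<omega> + d * U \<omega>)"
  define f where "f t = pmass M Y (b + of_int (round ((t - b) / d)) * d) / d" for t
  have f [measurable]: "f \<in> borel_measurable borel"
    unfolding f_def by (intro borel_measurable_divide measurable_compose[OF measurable_round_affine]) simp_all
  have ln_pmass_Y [measurable]: "(\<lambda>\<omega>. ln (pmass M Y (Y \<omega>))) \<in> borel_measurable M"
    by (rule measurable_comp_Y)
  have "AE \<omega> in M. f (Z \<omega>) = pmass M Y (Y \<omega>) / d"
    using AE_round_add_scaled_uniform[OF uniform_centered_moments(1)[OF U unif]]
    by eventually_elim (simp add: f_def Z_def)
  then have ln_f: "AE \<omega> in M. ln (f (Z \<omega>)) = ln (pmass M Y (Y \<omega>)) - ln d"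
    using AE_mass_pos by eventually_elim (simp add: ln_div spacing_pos less_imp_neq[OF spacing_pos, symmetric])
  have "integrable M (\<lambda>\<omega>. ln (pmass M Y (Y \<omega>)) - ln d)"
    using integrable_ln_pmass_Y by simp
  then have ln_f_int: "integrable M (\<lambda>\<omega>. ln (f (Z \<omega>)))"
    by (rule integrable_cong_AE_imp) (use ln_f in \<open>auto simp: Z_def elim: eventually_mono\<close>)
  have "expectation (\<lambda>\<omega>. ln (f (Z \<omega>))) = expectation (\<lambda>\<omega>. ln (pmass M Y (Y \<omega>)) - ln d)"
    using ln_f by (intro integral_cong_AE) (auto simp: Z_def)
  also have "\<dots> = - disc_entropy M Y - ln d"
    using integrable_ln_pmass_Y by (simp add: expectation_ln_pmass_Y prob_space)
  finally have "expectation (\<lambda>\<omega>. ln (f (Z \<omega>))) = - disc_entropy M Y - ln d" .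
  moreover have "rv_var M Z = 1 + d\<^sup>2 / 12"
    using expectation_add_scaled_uniform[OF indep unif] expectation_add_scaled_uniform_square[OF indep unif]
    by (simp add: rv_mean_def rv_var_def Z_def)
  moreover have "dkl_cont M Z = ln (sqrt (2 * pi * rv_var M Z)) + 1/2 + expectation (\<lambda>\<omega>. ln (f (Z \<omega>)))"
    using distr_add_scaled_uniform[OF indep unif] integrable_add_scaled_uniform_square[OF indep unif]
      ln_f_int spacing_pos \<open>rv_var M Z = 1 + d\<^sup>2 / 12\<close>
    by (intro dkl_cont_eq_expectation_ln_density) (auto simp: Z_def f_def pmass_nonneg add_pos_nonneg)
  ultimately show ?thesis
    by (simp add: Z_def)
qed

lemma dkl_lattice_dkl_cont_approx:
  fixes U :: "'a \<Rightarrow> real"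
  assumes indep: "indep_var borel Y borel U"
    and unif: "distr M lborel U = uniform_measure lborel {-1/2<..<1/2}"
  shows "\<bar>dkl_lattice M Y b d - dkl_cont M (\<lambda>\<omega>. Y \<omega> + d * U \<omega>)\<bar> \<le> d + 13 * d\<^sup>2 / 24"
proof -
  define v where "v = 1 + d\<^sup>2 / 12"
  have v_pos: "v > 0"
    by (simp add: v_def add_pos_nonneg)
  then have "ln (sqrt (2 * pi * v)) = ln (sqrt (2 * pi)) + ln v / 2"
    by (simp add: ln_sqrt ln_mult)
  moreover have "0 \<le> ln v" "ln v \<le> d\<^sup>2 / 12"
    using ln_le_minus_one[OF v_pos] by (simp_all add: v_def)
  ultimately have "dkl_lattice M Y b d - dkl_cont M (\<lambda>\<omega>. Y \<omega> + d * U \<omega>)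
      = (dkl_lattice M Y b d - (ln (sqrt (2 * pi)) + 1/2 - ln d - disc_entropy M Y)) - ln v / 2"
    and "0 \<le> ln v" "ln v \<le> d\<^sup>2 / 12"
    unfolding dkl_cont_add_scaled_uniform[OF indep unif] v_def[symmetric] by simp_all
  then show ?thesis
    using dkl_lattice_approx unfolding abs_le_iff by (intro conjI) linarith+
qed

end


lemma std_lattice_rv_standardized_sum:
  fixes M :: "'a measure" and w :: "'i \<Rightarrow> 'a \<Rightarrow> real" and I :: "'i set" and a l :: real
  assumes M: "prob_space M" and I: "finite I" and l: "l > 0"
    and lattice: "\<And>i \<omega>. i \<in> I \<Longrightarrow> \<omega> \<in> space M \<Longrightarrow> w i \<omega> \<in> range (\<lambda>k::int. a + of_int k * l)"
    and indep: "prob_space.indep_vars M (\<lambda>_. borel) w I"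
    and sq_int: "\<And>i. i \<in> I \<Longrightarrow> integrable M (\<lambda>\<omega>. (w i \<omega>)\<^sup>2)"
    and centered: "\<And>i. i \<in> I \<Longrightarrow> rv_mean M (w i) = 0"
  defines "s \<equiv> sqrt (\<Sum>i\<in>I. rv_var M (w i))"
  assumes s_pos: "s > 0"
  shows "std_lattice_rv M (\<lambda>\<omega>. (\<Sum>i\<in>I. w i \<omega>) / s) (real (card I) * a / s) (l / s)"
proof -
  interpret prob_space M by fact
  have centered': "expectation (w i) = 0" if "i \<in> I" for i
    using centered[OF that] by (simp add: rv_mean_def)
  note moments = indep_sum_moments[OF indep I sq_int centered']
  have "(\<Sum>i\<in>I. expectation (\<lambda>\<omega>. (w i \<omega>)\<^sup>2)) = s\<^sup>2"
    using s_pos centered' by (simp add: s_def rv_var_def rv_mean_def)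
  then have second_moment: "expectation (\<lambda>\<omega>. (\<Sum>i\<in>I. w i \<omega>)\<^sup>2) = s\<^sup>2"
    using moments(3) by simp
  show ?thesis
  proof unfold_locales
    show "(\<lambda>\<omega>. (\<Sum>i\<in>I. w i \<omega>) / s) \<in> borel_measurable M"
      using indep unfolding indep_vars_def by (intro borel_measurable_divide borel_measurable_sum) auto
    show "0 < l / s"
      using l s_pos by simp
    fix \<omega> assume "\<omega> \<in> space M"
    then obtain k :: int where "(\<Sum>i\<in>I. w i \<omega>) = real (card I) * a + of_int k * l"
      using sum_in_shifted_lattice[OF I, of "\<lambda>i. w i \<omega>" a l] lattice by blast
    then show "\<exists>k::int. (\<Sum>i\<in>I. w i \<omega>) / s = real (card I) * a / s + of_int k * (l / s)"
      by (intro exI[of _ k]) (simp add: add_divide_distrib)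
  next
    show "integrable M (\<lambda>\<omega>. ((\<Sum>i\<in>I. w i \<omega>) / s)\<^sup>2)"
      using moments(2) by (simp add: power_divide)
    show mean: "rv_mean M (\<lambda>\<omega>. (\<Sum>i\<in>I. w i \<omega>) / s) = 0"
      using moments(1) by (simp add: rv_mean_def)
    show "rv_var M (\<lambda>\<omega>. (\<Sum>i\<in>I. w i \<omega>) / s) = 1"
      using mean second_moment s_pos by (simp add: rv_var_def power_divide)
  qed
qed

theorem lemma3p1:
  fixes M :: "'a measure" and w :: "nat \<Rightarrow> 'a \<Rightarrow> real" and a l :: real
  assumes P: "prob_space M"
    and a: "a \<ge> 0" and l: "l > 0"
    and lattice: "\<forall>i\<ge>1. \<forall>\<omega>\<in>space M. w i \<omega> \<in> range (\<lambda>k::int. a + of_int k * l)"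
    and indep: "prob_space.indep_vars M (\<lambda>_. borel) w {1..}"
    and finvar: "\<forall>i\<ge>1. integrable M (\<lambda>\<omega>. (w i \<omega>)\<^sup>2)"
    and mean0: "\<forall>i\<ge>1. rv_mean M (w i) = 0"
  defines "s \<equiv> \<lambda>n::nat. sqrt (\<Sum>i=1..n. rv_var M (w i))"
    and "S \<equiv> \<lambda>(n::nat) \<omega>. \<Sum>i=1..n. w i \<omega>"
  shows
    "(\<forall>n\<ge>1. s n > 0 \<longrightarrow>
        \<bar>dkl_lattice M (\<lambda>\<omega>. S n \<omega> / s n) (real n * a / s n) (l / s n)
          - (1/2 * ln (2 * pi * exp 1) - (disc_entropy M (S n) - ln (s n / l)))\<bar>
          \<le> l / s n + l\<^sup>2 / (2 * (s n)\<^sup>2))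
     \<and> (\<forall>U :: 'a \<Rightarrow> real.
          prob_space.indep_vars M (\<lambda>_. borel)
              (\<lambda>j. case j of None \<Rightarrow> U | Some i \<Rightarrow> w i) (insert None (Some ` {1..}))
          \<and> distr M lborel U = uniform_measure lborel {-1/2<..<1/2}
          \<longrightarrow> (\<forall>n\<ge>1. s n > 0 \<longrightarrow>
                \<bar>dkl_lattice M (\<lambda>\<omega>. S n \<omega> / s n) (real n * a / s n) (l / s n)
                  - dkl_cont M (\<lambda>\<omega>. S n \<omega> / s n + l / s n * U \<omega>)\<bar>
                  \<le> l / s n + 13 * l\<^sup>2 / (24 * (s n)\<^sup>2)))"
proof -
  interpret prob_space M by fact
  have std: "std_lattice_rv M (\<lambda>\<omega>. S n \<omega> / s n) (real n * a / s n) (l / s n)" if "s n > 0" for n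
    using std_lattice_rv_standardized_sum[OF P finite_atLeastAtMost[of 1 n] l _ indep_vars_subset[OF indep]]
      lattice finvar mean0 that by (auto simp: s_def S_def)
  have entropy: "disc_entropy M (\<lambda>\<omega>. S n \<omega> / s n) = disc_entropy M (S n)" if "s n > 0" for n
    using disc_entropy_comp_inj[of "\<lambda>x. x / s n" M "S n"] that by (simp add: inj_on_def)
  show ?thesis
  proof (intro conjI allI impI)
    fix n :: nat assume "s n > 0"
    then have "1/2 * ln (2 * pi * exp 1) - (disc_entropy M (S n) - ln (s n / l))
        = ln (sqrt (2 * pi)) + 1/2 - ln (l / s n) - disc_entropy M (\<lambda>\<omega>. S n \<omega> / s n)"
      using l entropy by (simp add: ln_mult ln_div ln_sqrt)
    then show "\<bar>dkl_lattice M (\<lambda>\<omega>. S n \<omega> / s n) (real n * a / s n) (l / s n)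
        - (1/2 * ln (2 * pi * exp 1) - (disc_entropy M (S n) - ln (s n / l)))\<bar> \<le> l / s n + l\<^sup>2 / (2 * (s n)\<^sup>2)"
      using std_lattice_rv.dkl_lattice_approx[OF std[OF \<open>s n > 0\<close>]] by (simp add: power_divide)
  next
    fix U :: "'a \<Rightarrow> real" and n :: nat
    assume U: "indep_vars (\<lambda>_. borel) (\<lambda>j. case j of None \<Rightarrow> U | Some i \<Rightarrow> w i) (insert None (Some ` {1..}))
        \<and> distr M lborel U = uniform_measure lborel {-1/2<..<1/2}"
      and "s n > 0"
    have "indep_var borel (\<lambda>\<omega>. S n \<omega> / s n) borel U"
      using indep_var_compose[OF indep_var_sum_adjoined[OF U[THEN conjunct1], of "{1..n}"],
          of "\<lambda>x. x / s n" borel id borel]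
      by (auto simp: S_def comp_def)
    then have "\<bar>dkl_lattice M (\<lambda>\<omega>. S n \<omega> / s n) (real n * a / s n) (l / s n)
        - dkl_cont M (\<lambda>\<omega>. S n \<omega> / s n + l / s n * U \<omega>)\<bar> \<le> l / s n + 13 * (l / s n)\<^sup>2 / 24"
      using std_lattice_rv.dkl_lattice_dkl_cont_approx[OF std[OF \<open>s n > 0\<close>]] U by blast
    also have "\<dots> = l / s n + 13 * l\<^sup>2 / (24 * (s n)\<^sup>2)"
      by (simp add: power_divide)
    finally show "\<bar>dkl_lattice M (\<lambda>\<omega>. S n \<omega> / s n) (real n * a / s n) (l / s n)
        - dkl_cont M (\<lambda>\<omega>. S n \<omega> / s n + l / s n * U \<omega>)\<bar> \<le> l / s n + 13 * l\<^sup>2 / (24 * (s n)\<^sup>2)" .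
  qed
qed

end
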